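(* Let $\{\lambda_n\}_{n\geq 1}$ be i.i.d. random variables, each uniformly distributed on the interval $(3.87,4)$, and let $X_0$ be a $(0,1)$-valued random variable independent of the $\lambda_n$'s. Define the Markov process $X_{n+1}=\lambda_{n+1}X_n(1-X_n)$ for $n\geq 0$, and let $p^n(x,B)=\mathrm{Prob}(X_n\in B\mid X_0=x)$ denote its $n$-step transition probabilities. Let $A$ be a nonempty open subset of $(0,1)$. Then for every $x\in(0,1)$ there exists a positive integer $M$ such that $p^M(x,A)=\mathrm{Prob}(X_M\in A\mid X_0=x)>0$.
   Context: The one-step transition probability is $p(x,B)=\mathrm{Prob}(\lambda_1 x(1-x)\in B)$ for Borel $B\subset(0,1)$, and $p^n$ is the $n$-step transition probability of the Markov chain. *)

theory Defs
  imports "HOL-Probability.Probability"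
begin

definition lambda_law :: "real measure" where
  "lambda_law = uniform_measure lborel {387/100<..<4}"

definition step_kernel :: "real \<Rightarrow> real measure" where
  "step_kernel x = distr lambda_law borel (\<lambda>l. l * x * (1 - x))"

fun n_step :: "nat \<Rightarrow> real \<Rightarrow> real measure" where
  "n_step 0 x = return borel x"
| "n_step (Suc n) x = bind (n_step n x) step_kernel"

end

theory Submission
  imports Defs
begin

text \<open>
  The points reachable from x by admissible steps y \<mapsto> \<lambda> y (1 - y), \<lambda> \<in> (3.87, 4), form an
  open set (the last multiplier ranges over an open interval), and since \<lambda> may be taken
  arbitrarily close to 4, this set is invariant under the full logistic map y \<mapsto> 4 y (1 - y),
  except at its critical point 1/2. The substitution y = sin (\<pi> \<phi> / 2)^2 conjugates that map to
  the tent map, which stretches every dyadic interval of level n + 1 onto one of level n;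
  hence an open invariant set meeting (0, 1) contains all of (0, 1), and every w \<in> (0, 1) is
  reachable from every x \<in> (0, 1). Finally, the support of p^n(x, \<cdot>) propagates along
  admissible steps, so every such w lies in the support of some p^M(x, \<cdot>).
\<close>

definition tent :: "real \<Rightarrow> real" where
  "tent \<phi> = (if \<phi> \<le> 1/2 then 2 * \<phi> else 2 - 2 * \<phi>)"

definition dyadic_interval :: "nat \<Rightarrow> nat \<Rightarrow> real set" where
  "dyadic_interval n k = {real k / 2 ^ n <..< (real k + 1) / 2 ^ n}"

lemma dyadic_interval_subset_unit:
  assumes "k < 2 ^ n"
  shows "dyadic_interval n k \<subseteq> {0<..<1}"
proof -
  have "real (Suc k) \<le> real (2 ^ n)"
    using assms by (simp only: of_nat_le_iff Suc_le_eq)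
  then have "0 \<le> real k / 2 ^ n" "(real k + 1) / 2 ^ n \<le> 1"
    by simp_all
  then show ?thesis
    unfolding dyadic_interval_def subset_iff greaterThanLessThan_iff by linarith
qed

lemma half_mem_dyadic_interval_Suc:
  "\<psi> \<in> dyadic_interval n k \<Longrightarrow> \<psi> / 2 \<in> dyadic_interval (Suc n) k"
  by (simp add: dyadic_interval_def field_simps)

lemma reflected_half_mem_dyadic_interval_Suc:
  assumes "k < 2 ^ n" "\<psi> \<in> dyadic_interval n k"
  shows "1 - \<psi> / 2 \<in> dyadic_interval (Suc n) (2 ^ Suc n - 1 - k)"
proof -
  have "real (2 ^ Suc n - 1 - k) = 2 * 2 ^ n - 1 - real k"
    using assms(1) by (simp add: of_nat_diff)
  with assms(2) show ?thesis
    by (simp add: dyadic_interval_def field_simps)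
qed

lemma tent_invariant_dyadic_imp_unit:
  assumes inv: "\<And>\<phi>. \<phi> \<in> \<Theta> \<Longrightarrow> \<phi> \<noteq> 1/2 \<Longrightarrow> tent \<phi> \<in> \<Theta>"
  shows "k < 2 ^ n \<Longrightarrow> dyadic_interval n k \<subseteq> \<Theta> \<Longrightarrow> {0<..<1} \<subseteq> \<Theta>"
proof (induction n arbitrary: k)
  case 0
  then show ?case
    by (simp add: dyadic_interval_def)
next
  case (Suc n)
  obtain k' where k': "k' < 2 ^ n" and "dyadic_interval n k' \<subseteq> \<Theta>"
  proof (cases "k < 2 ^ n")
    case True
    have "\<psi> \<in> \<Theta>" if \<psi>: "\<psi> \<in> dyadic_interval n k" for \<psi>
    proof -
      have "\<psi> < 1"
        using dyadic_interval_subset_unit[OF True] \<psi> by auto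
      then show ?thesis
        using inv[of "\<psi> / 2"] Suc.prems(2) half_mem_dyadic_interval_Suc[OF \<psi>]
        by (auto simp: tent_def)
    qed
    with True show thesis
      using that by blast
  next
    case False
    define k' where "k' = 2 ^ Suc n - 1 - k"
    have "k' < 2 ^ n" "2 ^ Suc n - 1 - k' = k"
      using False Suc.prems(1) by (simp_all add: k'_def)
    moreover have "\<psi> \<in> \<Theta>" if \<psi>: "\<psi> \<in> dyadic_interval n k'" for \<psi>
    proof -
      have "\<psi> < 1"
        using dyadic_interval_subset_unit[OF \<open>k' < 2 ^ n\<close>] \<psi> by auto
      then show ?thesis
        using inv[of "1 - \<psi> / 2"] Suc.prems(2)
          reflected_half_mem_dyadic_interval_Suc[OF \<open>k' < 2 ^ n\<close> \<psi>] \<open>2 ^ Suc n - 1 - k' = k\<close>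
        by (auto simp: tent_def)
    qed
    ultimately show thesis
      using that by blast
  qed
  then show ?case
    by (rule Suc.IH)
qed

lemma open_contains_dyadic_interval:
  assumes "open \<Theta>" "\<phi> \<in> \<Theta>" "0 \<le> \<phi>" "\<phi> < 1"
  obtains n k where "k < 2 ^ n" "dyadic_interval n k \<subseteq> \<Theta>"
proof -
  obtain e where "0 < e" and ball: "ball \<phi> e \<subseteq> \<Theta>"
    using assms(1,2) open_contains_ball by blast
  then obtain n where n: "(1/2) ^ n < e"
    using real_arch_pow_inv[of e "1/2"] by auto
  define k where "k = nat \<lfloor>\<phi> * 2 ^ n\<rfloor>"
  have k: "real k \<le> \<phi> * 2 ^ n" "\<phi> * 2 ^ n < real k + 1"
    using assms(3) by (simp_all add: k_def)
  have "real k < 2 ^ n"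
    using k(1) assms(4) by (smt (verit) mult_less_cancel_right2 zero_less_power)
  then have "k < 2 ^ n"
    by (metis of_nat_less_iff of_nat_numeral of_nat_power)
  moreover have "dyadic_interval n k \<subseteq> ball \<phi> e"
  proof
    fix \<psi> assume "\<psi> \<in> dyadic_interval n k"
    then have "real k < \<psi> * 2 ^ n" "\<psi> * 2 ^ n < real k + 1"
      by (simp_all add: dyadic_interval_def field_simps)
    with k have "\<bar>\<psi> * 2 ^ n - \<phi> * 2 ^ n\<bar> < 1"
      by (simp only: abs_less_iff) linarith
    then have "\<bar>\<psi> - \<phi>\<bar> * 2 ^ n < 1"
      by (simp add: abs_mult flip: left_diff_distrib)
    then have "\<bar>\<psi> - \<phi>\<bar> < (1/2) ^ n"
      by (simp add: field_simps power_one_over)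
    with n show "\<psi> \<in> ball \<phi> e"
      by (simp add: dist_real_def abs_minus_commute)
  qed
  ultimately show thesis
    using ball that by blast
qed

lemma tent_invariant_open_contains_unit:
  assumes "open \<Theta>" "\<phi> \<in> \<Theta>" "0 \<le> \<phi>" "\<phi> < 1"
    and "\<And>\<phi>. \<phi> \<in> \<Theta> \<Longrightarrow> \<phi> \<noteq> 1/2 \<Longrightarrow> tent \<phi> \<in> \<Theta>"
  shows "{0<..<1} \<subseteq> \<Theta>"
  using open_contains_dyadic_interval[OF assms(1-4)] tent_invariant_dyadic_imp_unit[OF assms(5)]
  by metis

lemma tent_unit:
  assumes "0 < \<phi>" "\<phi> < 1" "\<phi> \<noteq> 1/2"
  shows "0 < tent \<phi>" "tent \<phi> < 1"
  using assms by (auto simp: tent_def)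

definition sin_sq_half_pi :: "real \<Rightarrow> real" where
  "sin_sq_half_pi \<phi> = sin (pi * \<phi> / 2) ^ 2"

lemma logistic_sin_sq_half_pi:
  "4 * sin_sq_half_pi \<phi> * (1 - sin_sq_half_pi \<phi>) = sin_sq_half_pi (tent \<phi>)"
proof -
  have "4 * sin_sq_half_pi \<phi> * (1 - sin_sq_half_pi \<phi>) = (2 * sin (pi * \<phi> / 2) * cos (pi * \<phi> / 2)) ^ 2"
    unfolding sin_sq_half_pi_def by (simp add: cos_squared_eq power_mult_distrib)
  also have "\<dots> = sin (pi * \<phi>) ^ 2"
    using sin_double[of "pi * \<phi> / 2"] by simp
  also have "\<dots> = sin_sq_half_pi (tent \<phi>)"
  proof -
    have "pi * (2 * \<phi>) / 2 = pi * \<phi>" "pi * (2 - 2 * \<phi>) / 2 = pi - pi * \<phi>"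
      by (simp_all add: field_simps)
    then have "sin_sq_half_pi (2 * \<phi>) = sin (pi * \<phi>) ^ 2"
      "sin_sq_half_pi (2 - 2 * \<phi>) = sin (pi - pi * \<phi>) ^ 2"
      unfolding sin_sq_half_pi_def by (simp_all only:)
    then show ?thesis
      by (simp add: tent_def)
  qed
  finally show ?thesis .
qed

lemma sin_sq_half_pi_unit:
  assumes "0 < \<phi>" "\<phi> < 1"
  shows "0 < sin_sq_half_pi \<phi>" "sin_sq_half_pi \<phi> < 1"
proof -
  have "0 < pi * \<phi> / 2" "pi * \<phi> / 2 < pi / 2"
    using assms by simp_all
  moreover have "0 < pi / 2"
    by simp
  ultimately have "0 < sin (pi * \<phi> / 2)" "0 < cos (pi * \<phi> / 2)"
    by (simp_all only: sin_gt_zero cos_gt_zero_pi)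
  then have "0 < sin (pi * \<phi> / 2) ^ 2" "0 < cos (pi * \<phi> / 2) ^ 2"
    by simp_all
  with sin_cos_squared_add[of "pi * \<phi> / 2"]
  show "0 < sin_sq_half_pi \<phi>" "sin_sq_half_pi \<phi> < 1"
    unfolding sin_sq_half_pi_def by linarith+
qed

lemma continuous_sin_sq_half_pi: "continuous_on S sin_sq_half_pi"
  unfolding sin_sq_half_pi_def by (auto intro!: continuous_intros)

lemma sin_sq_half_pi_surj:
  assumes "0 < w" "w < 1"
  obtains \<phi> where "0 < \<phi>" "\<phi> < 1" "sin_sq_half_pi \<phi> = w"
proof -
  have "sin_sq_half_pi 0 = 0" "sin_sq_half_pi 1 = 1"
    by (simp_all add: sin_sq_half_pi_def)
  then obtain \<phi> where "0 \<le> \<phi>" "\<phi> \<le> 1" "sin_sq_half_pi \<phi> = w"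
    using IVT'[of sin_sq_half_pi 0 w 1] assms continuous_sin_sq_half_pi by auto
  with assms \<open>sin_sq_half_pi 0 = 0\<close> \<open>sin_sq_half_pi 1 = 1\<close> show thesis
    by (intro that) (auto simp: order.order_iff_strict)
qed

lemma logistic_le_quarter: "y * (1 - y) \<le> (1/4 :: real)"
proof -
  have "1/4 - y * (1 - y) = (y - 1/2) ^ 2"
    by (simp add: power2_eq_square algebra_simps)
  then show ?thesis
    by (metis diff_ge_0_iff_ge zero_le_power2)
qed

text \<open>The multiplier ranges over (a, 4); the theorem needs a = 3.87, the argument only a < 4.\<close>

definition logistic_step :: "real \<Rightarrow> real \<Rightarrow> real \<Rightarrow> bool" where
  "logistic_step a y w \<longleftrightarrow> (\<exists>l\<in>{a<..<4}. w = l * y * (1 - y))"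

lemma open_reachable_unit: "open {w \<in> {0<..<1}. (logistic_step a)\<^sup>+\<^sup>+ x w}"
proof (rule Topological_Spaces.openI)
  fix w assume "w \<in> {w \<in> {0<..<1}. (logistic_step a)\<^sup>+\<^sup>+ x w}"
  then have w: "0 < w" "w < 1" "(logistic_step a)\<^sup>+\<^sup>+ x w"
    by auto
  then obtain y where y: "(logistic_step a)\<^sup>*\<^sup>* x y" "logistic_step a y w"
    by (metis tranclp.cases rtranclp.rtrancl_refl tranclp_into_rtranclp)
  then obtain l where l: "l \<in> {a<..<4}" "w = y * (1 - y) * l"
    unfolding logistic_step_def by (auto simp: ac_simps)
  define T where "T = (\<lambda>l. y * (1 - y) * l) ` {a<..<4} \<inter> {0<..<1}"
  have "y * (1 - y) \<noteq> 0"
    using l w(1) by auto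
  then have "open T"
    using open_scaling[of "y * (1 - y)" "{a<..<4}"] by (auto simp: T_def)
  moreover have "w \<in> T"
    using l w by (auto simp: T_def)
  moreover have "T \<subseteq> {w \<in> {0<..<1}. (logistic_step a)\<^sup>+\<^sup>+ x w}"
  proof
    fix t assume "t \<in> T"
    then obtain l' where "l' \<in> {a<..<4}" "t = l' * y * (1 - y)" "t \<in> {0<..<1}"
      by (auto simp: T_def ac_simps)
    then have "logistic_step a y t"
      by (auto simp: logistic_step_def)
    with \<open>t \<in> {0<..<1}\<close> show "t \<in> {w \<in> {0<..<1}. (logistic_step a)\<^sup>+\<^sup>+ x w}"
      using rtranclp_into_tranclp1[OF y(1)] by blast
  qed
  ultimately show "\<exists>T. open T \<and> w \<in> T \<and> T \<subseteq> {w \<in> {0<..<1}. (logistic_step a)\<^sup>+\<^sup>+ x w}"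
    by blast
qed

text \<open>
  Move from y slightly towards 1/2, to y' with y'(1 - y') slightly above y(1 - y); then a
  multiplier slightly below 4 sends y' to 4 y (1 - y).
\<close>

lemma open_logistic_step_to_logistic4:
  assumes "a < 4" "open U" "y \<in> U" "0 < y" "y < 1" "y \<noteq> 1/2"
  obtains y' where "y' \<in> U" "logistic_step a y' (4 * y * (1 - y))"
proof -
  define q where "q = y * (1 - y)"
  define f where "f s = y + s * (1 - 2 * y)" for s :: real
  have "q > 0"
    using assms(4,5) by (simp add: q_def)
  have f_tendsto: "(f \<longlongrightarrow> y) (at_right 0)"
    unfolding f_def by (auto intro!: tendsto_eq_intros)
  then have "((\<lambda>s. a * (f s * (1 - f s))) \<longlongrightarrow> a * q) (at_right 0)"
    unfolding q_def by (auto intro!: tendsto_eq_intros)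
  moreover have "a * q < 4 * q"
    using \<open>q > 0\<close> assms(1) by simp
  ultimately have "\<forall>\<^sub>F s in at_right 0. a * (f s * (1 - f s)) < 4 * q"
    by (rule order_tendstoD(2))
  moreover have "\<forall>\<^sub>F s in at_right 0. f s \<in> U"
    using topological_tendstoD[OF f_tendsto assms(2,3)] .
  moreover have "\<forall>\<^sub>F s in at_right 0. 0 < (s::real)"
    by (rule eventually_at_right_less)
  moreover have "\<forall>\<^sub>F s in at_right 0. s < (1::real)"
    by (auto simp: eventually_at_right_field intro: exI[of _ 1])
  ultimately have "\<forall>\<^sub>F s in at_right 0. a * (f s * (1 - f s)) < 4 * q \<and> f s \<in> U \<and> 0 < s \<and> s < 1"
    by (intro eventually_conj)
  then obtain s where s: "a * (f s * (1 - f s)) < 4 * q" "f s \<in> U" "0 < s" "s < 1"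
    using eventually_happens'[OF trivial_limit_at_right_real] by blast
  define q' where "q' = f s * (1 - f s)"
  have "q' = q + s * (1 - s) * (1 - 2 * y) ^ 2"
    by (simp add: q'_def q_def f_def power2_eq_square algebra_simps)
  moreover have "0 < s * (1 - s) * (1 - 2 * y) ^ 2"
    using s(3,4) assms(6) by simp
  ultimately have "q < q'"
    by simp
  with \<open>q > 0\<close> have "q' > 0"
    by simp
  define l where "l = 4 * q / q'"
  have "a < l" "l < 4"
    using s(1) \<open>q < q'\<close> \<open>q' > 0\<close> by (simp_all add: l_def less_divide_eq divide_less_eq flip: q'_def)
  moreover have "l * f s * (1 - f s) = 4 * y * (1 - y)"
    using \<open>q' > 0\<close> by (simp add: l_def mult.assoc flip: q'_def) (simp add: q_def)
  ultimately show thesis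
    using s(2) by (intro that[of "f s"]) (auto simp: logistic_step_def intro!: bexI[of _ l])
qed

lemma ex_logistic_step_unit:
  assumes "a < 4" "0 < x" "x < 1"
  obtains w where "logistic_step a x w" "0 < w" "w < 1"
proof -
  define l where "l = (max a 0 + 4) / 2"
  have "a < l" "0 < l" "l < 4"
    using assms(1) by (auto simp: l_def)
  moreover have "0 < x * (1 - x)" "x * (1 - x) \<le> 1/4"
    using assms(2,3) logistic_le_quarter by simp_all
  ultimately have "0 < l * x * (1 - x)" "l * x * (1 - x) < 1"
    using mult_strict_right_mono[of l 4 "x * (1 - x)"] by (simp_all add: mult.assoc algebra_simps)
  moreover have "logistic_step a x (l * x * (1 - x))"
    using \<open>a < l\<close> \<open>l < 4\<close> by (auto simp: logistic_step_def)
  ultimately show thesis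
    using that by blast
qed

lemma reachable_logistic4:
  assumes "a < 4" "(logistic_step a)\<^sup>+\<^sup>+ x y" "0 < y" "y < 1" "y \<noteq> 1/2"
  shows "(logistic_step a)\<^sup>+\<^sup>+ x (4 * y * (1 - y))"
proof -
  have "y \<in> {w \<in> {0<..<1}. (logistic_step a)\<^sup>+\<^sup>+ x w}"
    using assms(2-4) by simp
  then obtain y' where "(logistic_step a)\<^sup>+\<^sup>+ x y'" "logistic_step a y' (4 * y * (1 - y))"
    using open_logistic_step_to_logistic4[OF assms(1) open_reachable_unit _ assms(3-5)] by blast
  then show ?thesis
    by (rule tranclp.trancl_into_trancl)
qed

lemma reachable_sin_sq_half_pi_tent:
  assumes "a < 4" "0 < \<phi>" "\<phi> < 1" "\<phi> \<noteq> 1/2" "(logistic_step a)\<^sup>+\<^sup>+ x (sin_sq_half_pi \<phi>)"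
  shows "(logistic_step a)\<^sup>+\<^sup>+ x (sin_sq_half_pi (tent \<phi>))"
proof -
  define y where "y = sin_sq_half_pi \<phi>"
  have "0 < y" "y < 1"
    using sin_sq_half_pi_unit assms(2,3) by (simp_all add: y_def)
  have "0 < tent \<phi>" "tent \<phi> < 1"
    using tent_unit assms(2-4) by auto
  moreover have tent_y: "sin_sq_half_pi (tent \<phi>) = 4 * y * (1 - y)"
    by (simp add: y_def logistic_sin_sq_half_pi)
  ultimately have "4 * y * (1 - y) < 1"
    using sin_sq_half_pi_unit[of "tent \<phi>"] by simp
  then have "y \<noteq> 1/2"
    by (intro notI) simp
  then show ?thesis
    using reachable_logistic4 assms(1,5) \<open>0 < y\<close> \<open>y < 1\<close> by (simp add: tent_y y_def)
qed

lemma logistic_step_reaches_unit: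
  assumes "a < 4" "0 < x" "x < 1" "0 < w" "w < 1"
  shows "(logistic_step a)\<^sup>+\<^sup>+ x w"
proof -
  define \<Theta> where "\<Theta> = {0<..<1} \<inter> sin_sq_half_pi -` {w \<in> {0<..<1}. (logistic_step a)\<^sup>+\<^sup>+ x w}"
  have "open \<Theta>"
    unfolding \<Theta>_def using open_reachable_unit
    by (intro continuous_open_preimage continuous_sin_sq_half_pi) auto
  obtain w\<^sub>0 where "logistic_step a x w\<^sub>0" "0 < w\<^sub>0" "w\<^sub>0 < 1"
    using ex_logistic_step_unit[OF assms(1-3)] .
  moreover obtain \<phi>\<^sub>0 where "0 < \<phi>\<^sub>0" "\<phi>\<^sub>0 < 1" "sin_sq_half_pi \<phi>\<^sub>0 = w\<^sub>0"
    using sin_sq_half_pi_surj \<open>0 < w\<^sub>0\<close> \<open>w\<^sub>0 < 1\<close> by blast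
  ultimately have "\<phi>\<^sub>0 \<in> \<Theta>" "0 \<le> \<phi>\<^sub>0" "\<phi>\<^sub>0 < 1"
    by (auto simp: \<Theta>_def)
  moreover have "tent \<phi> \<in> \<Theta>" if "\<phi> \<in> \<Theta>" "\<phi> \<noteq> 1/2" for \<phi>
    using that reachable_sin_sq_half_pi_tent[OF assms(1)] tent_unit sin_sq_half_pi_unit
    by (simp add: \<Theta>_def)
  ultimately have "{0<..<1} \<subseteq> \<Theta>"
    using tent_invariant_open_contains_unit[OF \<open>open \<Theta>\<close>] by auto
  moreover obtain \<phi> where "0 < \<phi>" "\<phi> < 1" "sin_sq_half_pi \<phi> = w"
    using sin_sq_half_pi_surj assms(4,5) by blast
  ultimately show ?thesis
    by (auto simp: \<Theta>_def)
qed

definition in_support :: "'a::topological_space measure \<Rightarrow> 'a \<Rightarrow> bool" where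
  "in_support M z \<longleftrightarrow> (\<forall>V. open V \<longrightarrow> z \<in> V \<longrightarrow> 0 < emeasure M V)"

lemma emeasure_bind_pos:
  assumes "space M \<noteq> {}" "K \<in> M \<rightarrow>\<^sub>M subprob_algebra N" "V \<in> sets N"
    and "U \<in> sets M" "0 < emeasure M U" "\<And>y. y \<in> U \<Longrightarrow> 0 < emeasure (K y) V"
  shows "0 < emeasure (M \<bind> K) V"
proof (rule ccontr)
  assume "\<not> 0 < emeasure (M \<bind> K) V"
  then have "(\<integral>\<^sup>+y. emeasure (K y) V \<partial>M) = 0"
    using emeasure_bind[OF assms(1-3)] by simp
  then have "AE y in M. emeasure (K y) V = 0"
    using nn_integral_0_iff_AE measurable_emeasure_kernel[OF assms(2,3)] by blast
  moreover have "AE y in M. emeasure (K y) V = 0 \<longrightarrow> y \<notin> U"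
    by (intro AE_I2) (metis assms(6) less_irrefl)
  ultimately have "AE y in M. y \<notin> U"
    by (rule AE_mp)
  then have "U \<in> null_sets M"
    using AE_iff_null_sets[OF assms(4)] by simp
  with assms(5) show False
    by (simp add: null_sets_def)
qed

lemma emeasure_uniform_measure_Ioo_pos:
  fixes a b :: real
  assumes "open V" "V \<inter> {a<..<b} \<noteq> {}"
  shows "0 < emeasure (uniform_measure lborel {a<..<b}) V"
proof -
  obtain c where c: "c \<in> V \<inter> {a<..<b}"
    using assms(2) by blast
  moreover have "open (V \<inter> {a<..<b})"
    using assms(1) by auto
  ultimately obtain e where "0 < e" "ball c e \<subseteq> V \<inter> {a<..<b}"
    using open_contains_ball by blast
  moreover have "ball c e = {c - e <..< c + e}"
    by (auto simp: ball_def dist_real_def)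
  ultimately have "emeasure lborel {c - e <..< c + e} \<le> emeasure lborel (V \<inter> {a<..<b})"
    using \<open>open (V \<inter> {a<..<b})\<close> by (intro emeasure_mono) auto
  moreover have "0 < emeasure lborel {c - e <..< c + e}"
    using \<open>0 < e\<close> by simp
  ultimately have "0 < emeasure lborel (V \<inter> {a<..<b})"
    by (rule order.strict_trans2[rotated])
  moreover have "emeasure lborel {a<..<b} = ennreal (b - a)" "a < b"
    using c by auto
  ultimately show ?thesis
    using assms(1) by (simp add: ennreal_divide_eq_0_iff zero_less_iff_neq_zero Int_commute)
qed

lemma prob_space_lambda_law: "prob_space lambda_law"
  unfolding lambda_law_def by (rule prob_space_uniform_measure) auto

lemma sets_lambda_law [simp, measurable_cong]: "sets lambda_law = sets borel"
  by (simp add: lambda_law_def)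

lemma space_lambda_law [simp]: "space lambda_law = UNIV"
  by (simp add: lambda_law_def)

lemma step_kernel_measurable: "step_kernel \<in> borel \<rightarrow>\<^sub>M subprob_algebra borel"
proof -
  have "lambda_law \<in> space (subprob_algebra borel)"
    using prob_space_lambda_law by (simp add: space_subprob_algebra prob_space_imp_subprob_space)
  then have "(\<lambda>x. distr lambda_law borel (\<lambda>l. l * x * (1 - x))) \<in> borel \<rightarrow>\<^sub>M subprob_algebra borel"
    by (intro measurable_distr2[where M=borel]) (simp_all add: case_prod_beta)
  then show ?thesis
    by (simp add: step_kernel_def[abs_def])
qed

lemma n_step_subprob: "n_step n x \<in> space (subprob_algebra borel)"
proof (induction n)
  case 0
  then show ?case
    by (simp add: space_subprob_algebra subprob_space_return)
next
  case (Suc n)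
  then have "subprob_space (n_step n x)" "sets (n_step n x) = sets borel"
    by (simp_all add: space_subprob_algebra)
  then have "subprob_space (n_step n x \<bind> step_kernel)"
    using step_kernel_measurable by (intro subprob_space_bind) (auto cong: measurable_cong_sets)
  moreover have "space (n_step n x) \<noteq> {}"
    using sets_eq_imp_space_eq[OF \<open>sets (n_step n x) = sets borel\<close>] by simp
  then have "sets (n_step n x \<bind> step_kernel) = sets borel"
    by (simp add: step_kernel_def)
  ultimately show ?case
    by (simp add: space_subprob_algebra)
qed

lemma sets_n_step: "sets (n_step n x) = sets borel"
  using n_step_subprob by (simp add: space_subprob_algebra)

lemma step_kernel_pos:
  assumes "open V" "l \<in> {387/100<..<4}" "l * y * (1 - y) \<in> V"
  shows "0 < emeasure (step_kernel y) V"
proof -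
  let ?W = "(\<lambda>l. l * y * (1 - y)) -` V"
  have "open ?W"
    using assms(1) by (intro open_vimage) (auto intro!: continuous_intros)
  moreover have "l \<in> ?W \<inter> {387/100<..<4}"
    using assms(2,3) by simp
  ultimately have "0 < emeasure lambda_law ?W"
    unfolding lambda_law_def by (intro emeasure_uniform_measure_Ioo_pos) auto
  moreover have "emeasure (step_kernel y) V = emeasure lambda_law ?W"
    unfolding step_kernel_def using assms(1) by (subst emeasure_distr) auto
  ultimately show ?thesis
    by simp
qed

lemma in_support_n_step_0: "in_support (n_step 0 x) x"
  by (simp add: in_support_def)

lemma in_support_n_step_Suc:
  assumes "in_support (n_step n x) y" "logistic_step (387/100) y w"
  shows "in_support (n_step (Suc n) x) w"
  unfolding in_support_def
proof (intro allI impI)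
  fix V :: "real set" assume V: "open V" "w \<in> V"
  obtain l where l: "l \<in> {387/100<..<4}" "w = l * y * (1 - y)"
    using assms(2) by (auto simp: logistic_step_def)
  let ?U = "{y. l * y * (1 - y) \<in> V}"
  have "continuous_on UNIV (\<lambda>y. l * y * (1 - y))"
    by (intro continuous_intros)
  then have "open ?U"
    using open_vimage[OF V(1)] by (simp add: vimage_def)
  then have "0 < emeasure (n_step n x) ?U"
    using assms(1) V l(2) by (auto simp: in_support_def)
  moreover have "space (n_step n x) \<noteq> {}"
    using sets_eq_imp_space_eq[OF sets_n_step] by simp
  moreover have "step_kernel \<in> n_step n x \<rightarrow>\<^sub>M subprob_algebra borel"
    using step_kernel_measurable by (simp add: measurable_cong_sets[OF sets_n_step refl])
  moreover have "V \<in> sets borel" "?U \<in> sets (n_step n x)"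
    using V(1) \<open>open ?U\<close> by (simp_all add: sets_n_step)
  ultimately show "0 < emeasure (n_step (Suc n) x) V"
    using emeasure_bind_pos[of "n_step n x" step_kernel borel V ?U] step_kernel_pos[OF V(1) l(1)]
    by simp
qed

lemma in_support_n_step_reachable:
  assumes "(logistic_step (387/100))\<^sup>+\<^sup>+ x w"
  shows "\<exists>M>0. in_support (n_step M x) w"
  using assms
proof (induction rule: tranclp_induct)
  case (base w)
  then show ?case
    using in_support_n_step_Suc[OF in_support_n_step_0] by blast
next
  case (step y w)
  then show ?case
    using in_support_n_step_Suc by blast
qed

theorem mainTheorem1:
  fixes A :: "real set"
  assumes "open A" and "A \<noteq> {}" and "A \<subseteq> {0<..<1}"
  shows "\<forall>x\<in>{0<..<1::real}. \<exists>M::nat. M > 0 \<and> emeasure (n_step M x) A > 0"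
proof
  fix x :: real assume x: "x \<in> {0<..<1}"
  obtain w where "w \<in> A"
    using assms(2) by blast
  then have "(logistic_step (387/100))\<^sup>+\<^sup>+ x w"
    using x assms(3) by (intro logistic_step_reaches_unit) auto
  then obtain M where "M > 0" "in_support (n_step M x) w"
    using in_support_n_step_reachable by blast
  with assms(1) \<open>w \<in> A\<close> show "\<exists>M::nat. M > 0 \<and> emeasure (n_step M x) A > 0"
    by (auto simp: in_support_def)
qed

end
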